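(* Let $M\in\Lambda$ and $A\in\mathcal A$. (1) If $A\sqsubseteq M$ then $\mathcal T_n(A)\subseteq\mathrm{NF}(\mathcal T(M))$. (2) If $\mathcal T_n(A)\subseteq\mathcal T_n(\mathrm{BT}(M))$ then $A\in\mathcal A(M)$, where $\mathcal T_n(\mathrm{BT}(M))=\bigcup_{A'\in\mathcal A(M)}\mathcal T_n(A')$.
   Context: $\lambda$-terms and values are $M,N::=V\mid MN$, $V::=x\mid\lambda x.M$, up to $\alpha$-conversion. Rules: $(\beta_v)$ $(\lambda x.M)V\to M\{x:=V\}$ if $V$ is a value; $(\sigma_1)$ $(\lambda x.M)NP\to(\lambda x.MP)N$ if $x\notin\mathrm{FV}(P)$; $(\sigma_3)$ $V((\lambda x.M)N)\to(\lambda x.VM)N$ if $V$ is a value and $x\notin\mathrm{FV}(V)$; $\to_{\mathsf v}$ is their contextual closure, $\twoheadrightarrow_{\mathsf v}$ its reflexive-transitive closure. Approximants: $\Lambda_\bot$ is the set of $\lambda$-terms possibly containing a constant $\bot$; $\sqsubseteq$ is the smallest context-closed preorder on $\Lambda_\bot$ with $\bot\sqsubseteq x$, $\bot\sqsubseteq\lambda x.M$. Approximants $\mathcal A$ ($k\ge0$): $A::=B\mid C$; $B::=x\mid\lambda x.A\mid\bot\mid xBA_1\cdots A_k$; $C::=(\lambda x.A)(yBA_1\cdots A_k)$. $\mathcal A(M)=\{A\in\mathcal A\mid\exists N\in\Lambda,\ M\twoheadrightarrow_{\mathsf v}N,\ A\sqsubseteq N\}$. Resource calculus: resource values $v::=x\mid\lambda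 x.t$; simple terms $s,t::=st\mid[v_1,\dots,v_k]$ (bags are finite multisets); $[x^n]$ is $n$ copies of $x$. Linear substitution $e\langle x:=v_1,\dots,v_n\rangle$ is the set of terms obtained by replacing the $n$ free occurrences of $x$ in $e$ bijectively by $v_1,\dots,v_n$ (all permutations), or $\emptyset$ if $x$ does not occur exactly $n$ times free. Constructors extend multilinearly to sets. Rules: $(\beta_r)$ $[\lambda x.t][v_1,\dots,v_n]\to t\langle x:=v_1,\dots,v_n\rangle$; $(0)$ $[v_1,\dots,v_n]t\to\emptyset$ if $n\ne1$; $(\sigma_1)$ $[\lambda x.t]s_1s_2\to[\lambda x.ts_2]s_1$ if $x\notin\mathrm{FV}(s_1)$; $(\sigma_3)$ $[v]([\lambda x.t]s)\to[\lambda x.[v]t]s$ if $x\notin\mathrm{FV}(v)$. $\to_{\mathsf r}$ is the closure of these rules under abstraction, both sides of application, elements of bags, and on finite sets ($e\to\mathcal E_1$, $e\notin\mathcal E_2$ imply $\{e\}\cup\mathcal E_2\to\mathcal E_1\cup\mathcal E_2$); it is confluent and strongly normalizing, $\mathrm{nf}(e)$ is the normal form and $\mathrm{NF}(\mathcal E)=\bigcup_{e\in\mathcal E}\mathrm{nf}(e)$. Taylor expansion: $\mathcal T(x)=\{[x^n]\mid n\ge0\}$, $\mathcal T(\lambda x.N)=\{[\lambda x.t_1,\dots,\lambda x.t_n]\mid n\ge0,\ t_i\in\mathcal T(N)\}$, $\mathcal T(PQ)=\{st\mid s\in\mathcal T(P),t\in\mathcal T(Q)\}$. Normalized Taylor expansion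 of approximants: $\mathcal T_n(x)=\{[x^n]\mid n\ge0\}$; $\mathcal T_n(\lambda x.A')=\{[\lambda x.t_1,\dots,\lambda x.t_n]\mid n\ge0,\ t_i\in\mathcal T_n(A')\}$; $\mathcal T_n(\bot)=\{[\,]\}$; $\mathcal T_n(xBA_1\cdots A_k)=\{[x]t_0t_1\cdots t_k\mid t_0\in\mathcal T_n(B),\ t_i\in\mathcal T_n(A_i)\}$; $\mathcal T_n((\lambda x.A')(yBA_1\cdots A_k))=\{[\lambda x.s]t\mid s\in\mathcal T_n(A'),\ t\in\mathcal T_n(yBA_1\cdots A_k)\}$. *)

theory Defs
  imports "HOL-Library.Multiset"
begin

datatype trm = Var nat | Lam trm | App trm trm

fun is_val :: "trm \<Rightarrow> bool" where
  "is_val (Var _) = True"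
| "is_val (Lam _) = True"
| "is_val (App _ _) = False"

primrec lift :: "nat \<Rightarrow> trm \<Rightarrow> trm" where
  "lift k (Var i) = (if i < k then Var i else Var (Suc i))"
| "lift k (Lam M) = Lam (lift (Suc k) M)"
| "lift k (App M N) = App (lift k M) (lift k N)"

primrec subst :: "trm \<Rightarrow> nat \<Rightarrow> trm \<Rightarrow> trm" where
  "subst (Var i) k N = (if i < k then Var i else if i = k then N else Var (i - 1))"
| "subst (Lam M) k N = Lam (subst M (Suc k) (lift 0 N))"
| "subst (App M P) k N = App (subst M k N) (subst P k N)"

inductive step_v :: "trm \<Rightarrow> trm \<Rightarrow> bool" where
  beta_v: "is_val V \<Longrightarrow> step_v (App (Lam M) V) (subst M 0 V)"
| sigma1: "step_v (App (App (Lam M) N) P) (App (Lam (App M (lift 0 P))) N)"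
| sigma3: "is_val V \<Longrightarrow> step_v (App V (App (Lam M) N)) (App (Lam (App (lift 0 V) M)) N)"
| ctx_lam: "step_v M M' \<Longrightarrow> step_v (Lam M) (Lam M')"
| ctx_appL: "step_v M M' \<Longrightarrow> step_v (App M N) (App M' N)"
| ctx_appR: "step_v N N' \<Longrightarrow> step_v (App M N) (App M N')"

abbreviation steps_v :: "trm \<Rightarrow> trm \<Rightarrow> bool" where
  "steps_v \<equiv> step_v\<^sup>*\<^sup>*"

datatype btrm = BVar nat | BLam btrm | BApp btrm btrm | Bot

primrec emb :: "trm \<Rightarrow> btrm" where
  "emb (Var i) = BVar i"
| "emb (Lam M) = BLam (emb M)"
| "emb (App M N) = BApp (emb M) (emb N)"

inductive bleq :: "btrm \<Rightarrow> btrm \<Rightarrow> bool" (infix "\<sqsubseteq>" 50) where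
  bot_var: "Bot \<sqsubseteq> BVar x"
| bot_lam: "Bot \<sqsubseteq> BLam M"
| refl: "M \<sqsubseteq> M"
| trans: "M \<sqsubseteq> N \<Longrightarrow> N \<sqsubseteq> P \<Longrightarrow> M \<sqsubseteq> P"
| ctx_lam: "M \<sqsubseteq> N \<Longrightarrow> BLam M \<sqsubseteq> BLam N"
| ctx_appL: "M \<sqsubseteq> N \<Longrightarrow> BApp M P \<sqsubseteq> BApp N P"
| ctx_appR: "M \<sqsubseteq> N \<Longrightarrow> BApp P M \<sqsubseteq> BApp P N"

definition bapps :: "btrm \<Rightarrow> btrm list \<Rightarrow> btrm" where
  "bapps h As = foldl BApp h As"

inductive is_A and is_B and is_C where
  A_B: "is_B A \<Longrightarrow> is_A A"
| A_C: "is_C A \<Longrightarrow> is_A A"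
| B_var: "is_B (BVar x)"
| B_lam: "is_A A \<Longrightarrow> is_B (BLam A)"
| B_bot: "is_B Bot"
| B_app: "is_B B \<Longrightarrow> (\<forall>A\<in>set As. is_A A) \<Longrightarrow> is_B (bapps (BApp (BVar x) B) As)"
| C_app: "is_A A \<Longrightarrow> is_B B \<Longrightarrow> (\<forall>A'\<in>set As. is_A A') \<Longrightarrow>
          is_C (BApp (BLam A) (bapps (BApp (BVar y) B) As))"

definition approx_set :: "trm \<Rightarrow> btrm set" ("\<A>") where
  "\<A> M = {A. is_A A \<and> (\<exists>N. steps_v M N \<and> A \<sqsubseteq> emb N)}"

datatype rtrm = RApp rtrm rtrm | Bag "rval multiset"
     and rval = RVar nat | RLam rtrm

primrec rlift :: "nat \<Rightarrow> rtrm \<Rightarrow> rtrm" and rliftv :: "nat \<Rightarrow> rval \<Rightarrow> rval" where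
  "rlift k (RApp s t) = RApp (rlift k s) (rlift k t)"
| "rlift k (Bag B) = Bag (image_mset (rliftv k) B)"
| "rliftv k (RVar i) = (if i < k then RVar i else RVar (Suc i))"
| "rliftv k (RLam t) = RLam (rlift (Suc k) t)"

text \<open>Linear substitution: lsub i V t t' holds iff t' is obtained from t by replacing
  the free occurrences of index i bijectively by the elements of the multiset V
  (indices above i are decremented, as the binder is removed).\<close>
inductive lsub :: "nat \<Rightarrow> rval multiset \<Rightarrow> rtrm \<Rightarrow> rtrm \<Rightarrow> bool"
  and lsubv :: "nat \<Rightarrow> rval multiset \<Rightarrow> rval \<Rightarrow> rval \<Rightarrow> bool" where
  ls_hit: "lsubv i {#v#} (RVar i) v"
| ls_lt: "j < i \<Longrightarrow> lsubv i {#} (RVar j) (RVar j)"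
| ls_gt: "i < j \<Longrightarrow> lsubv i {#} (RVar j) (RVar (j - 1))"
| ls_lam: "lsub (Suc i) (image_mset (rliftv 0) V) t t' \<Longrightarrow> lsubv i V (RLam t) (RLam t')"
| ls_app: "lsub i V1 s s' \<Longrightarrow> lsub i V2 t t' \<Longrightarrow> lsub i (V1 + V2) (RApp s t) (RApp s' t')"
| ls_nil: "lsub i {#} (Bag {#}) (Bag {#})"
| ls_bag: "lsubv i V1 v v' \<Longrightarrow> lsub i V2 (Bag B) (Bag B') \<Longrightarrow>
           lsub i (V1 + V2) (Bag (add_mset v B)) (Bag (add_mset v' B'))"

inductive rstep :: "rtrm \<Rightarrow> rtrm set \<Rightarrow> bool"
  and rstepv :: "rval \<Rightarrow> rval set \<Rightarrow> bool" where
  r_beta: "rstep (RApp (Bag {#RLam t#}) (Bag V)) {t'. lsub 0 V t t'}"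
| r_zero: "size B \<noteq> 1 \<Longrightarrow> rstep (RApp (Bag B) t) {}"
| r_sigma1: "rstep (RApp (RApp (Bag {#RLam t#}) s1) s2)
               {RApp (Bag {#RLam (RApp t (rlift 0 s2))#}) s1}"
| r_sigma3: "rstep (RApp (Bag {#v#}) (RApp (Bag {#RLam t#}) s))
               {RApp (Bag {#RLam (RApp (Bag {#rliftv 0 v#}) t)#}) s}"
| r_appL: "rstep s E \<Longrightarrow> rstep (RApp s t) ((\<lambda>s'. RApp s' t) ` E)"
| r_appR: "rstep t E \<Longrightarrow> rstep (RApp s t) ((\<lambda>t'. RApp s t') ` E)"
| r_bag: "rstepv v V \<Longrightarrow> rstep (Bag (add_mset v B)) ((\<lambda>v'. Bag (add_mset v' B)) ` V)"
| r_lam: "rstep t E \<Longrightarrow> rstepv (RLam t) (RLam ` E)"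

inductive rsstep :: "rtrm set \<Rightarrow> rtrm set \<Rightarrow> bool" where
  "rstep e E1 \<Longrightarrow> e \<notin> E2 \<Longrightarrow> finite E2 \<Longrightarrow> rsstep (insert e E2) (E1 \<union> E2)"

definition rnormal :: "rtrm \<Rightarrow> bool" where
  "rnormal e \<longleftrightarrow> (\<nexists>E. rstep e E)"

definition nf :: "rtrm \<Rightarrow> rtrm set" where
  "nf e = (THE E. rsstep\<^sup>*\<^sup>* {e} E \<and> (\<forall>e'\<in>E. rnormal e'))"

definition NF :: "rtrm set \<Rightarrow> rtrm set" where
  "NF \<E> = (\<Union>e\<in>\<E>. nf e)"

fun taylor :: "trm \<Rightarrow> rtrm set" ("\<T>") where
  "\<T> (Var x) = {Bag (replicate_mset n (RVar x)) | n. True}"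
| "\<T> (Lam N) = {Bag B | B. \<forall>v\<in>#B. \<exists>t\<in>\<T> N. v = RLam t}"
| "\<T> (App P Q) = {RApp s t | s t. s \<in> \<T> P \<and> t \<in> \<T> Q}"

text \<open>Tn_hd handles the head of an
  application chain: a head variable / head abstraction contributes a singleton bag.\<close>
fun Tn :: "btrm \<Rightarrow> rtrm set" and Tn_hd :: "btrm \<Rightarrow> rtrm set" where
  "Tn (BVar x) = {Bag (replicate_mset n (RVar x)) | n. True}"
| "Tn (BLam A) = {Bag B | B. \<forall>v\<in>#B. \<exists>t\<in>Tn A. v = RLam t}"
| "Tn Bot = {Bag {#}}"
| "Tn (BApp P Q) = {RApp s t | s t. s \<in> Tn_hd P \<and> t \<in> Tn Q}"
| "Tn_hd (BVar x) = {Bag {#RVar x#}}"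
| "Tn_hd (BLam A) = {Bag {#RLam s#} | s. s \<in> Tn A}"
| "Tn_hd (BApp P Q) = Tn (BApp P Q)"
| "Tn_hd Bot = {}"

end

theory Submission
  imports Defs
begin

text \<open>(1) Each element of \<open>Tn A\<close> belongs to the Taylor expansion of \<open>A\<close>, read with
  \<open>\<bottom> \<mapsto> [ ]\<close>; this expansion is monotone in \<open>\<sqsubseteq>\<close> and agrees with \<open>\<T>\<close> on \<open>\<bottom>\<close>-free terms.
  The shape of approximants (variable-headed spines, abstractions applied only to such
  spines) leaves no redex, so every element of \<open>Tn A\<close> is its own normal form.
  (2) The expansion of \<open>A\<close> with all bags singletons (and \<open>\<bottom>\<close> as the empty bag) lies in
  \<open>Tn A\<close> and determines \<open>A\<close> up to \<open>\<sqsubseteq>\<close>: if it lies in \<open>Tn A'\<close> then \<open>A \<sqsubseteq> A'\<close>. So \<open>A\<close> is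
  below some \<open>A' \<in> \<A> M\<close>, and \<open>\<A> M\<close> is downward closed among approximants.\<close>

lemma bapps_Nil [simp]: "bapps h [] = h"
  by (simp add: bapps_def)

lemma bapps_snoc [simp]: "bapps h (As @ [A]) = BApp (bapps h As) A"
  by (simp add: bapps_def)

lemma bapps_BApp_obtain:
  obtains P Q where "bapps (BApp P0 Q0) As = BApp P Q"
  by (induction As rule: rev_induct) auto

lemma single_eq_replicate_mset [simp]: "{#a#} = replicate_mset n b \<longleftrightarrow> a = b \<and> n = 1"
  by (cases n) (auto simp: single_eq_add_mset)

lemma Tn_hd_subset_Tn: "Tn_hd A \<subseteq> Tn A"
  by (cases A) auto

lemma Tn_hd_bapps_BApp [simp]: "Tn_hd (bapps (BApp P Q) As) = Tn (bapps (BApp P Q) As)"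
  by (metis bapps_BApp_obtain Tn_hd.simps(3))

fun var_headed :: "rtrm \<Rightarrow> bool" where
  "var_headed (Bag B) \<longleftrightarrow> (\<exists>x. B = {#RVar x#})"
| "var_headed (RApp s t) \<longleftrightarrow> var_headed s"

definition neutral :: "rtrm \<Rightarrow> bool" where
  "neutral t \<longleftrightarrow> var_headed t \<and> (\<forall>B. t \<noteq> Bag B)"

definition lam_app :: "rtrm \<Rightarrow> bool" where
  "lam_app t \<longleftrightarrow> (\<exists>u s. t = RApp (Bag {#RLam u#}) s)"

lemma rnormalI: "(\<And>E. rstep t E \<Longrightarrow> False) \<Longrightarrow> rnormal t"
  unfolding rnormal_def by blast

lemma rnormal_Bag:
  assumes "\<And>u. RLam u \<in># B \<Longrightarrow> rnormal u"
  shows "rnormal (Bag B)"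
proof (rule rnormalI)
  fix E assume "rstep (Bag B) E"
  then show False
  proof (cases rule: rstep.cases)
    case (r_bag v V B')
    from \<open>rstepv v V\<close> show False
    proof (cases rule: rstepv.cases)
      case (r_lam u E')
      with r_bag assms have "rnormal u" by simp
      with \<open>rstep u E'\<close> show False unfolding rnormal_def by blast
    qed
  qed
qed

text \<open>The hypothesis \<open>\<not> lam_app t\<close> excludes the \<open>\<sigma>\<^sub>3\<close>-redex \<open>[x] ([\<lambda>y. u] s)\<close>.\<close>

lemma rnormal_RApp_var:
  assumes "rnormal t" "\<not> lam_app t"
  shows "rnormal (RApp (Bag {#RVar x#}) t)"
proof (rule rnormalI)
  have "rnormal (Bag {#RVar x#})" by (rule rnormal_Bag) simp
  fix E assume "rstep (RApp (Bag {#RVar x#}) t) E"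
  then show False
    using assms \<open>rnormal (Bag {#RVar x#})\<close>
    by (cases rule: rstep.cases) (auto simp: rnormal_def lam_app_def)
qed

lemma rnormal_RApp_neutral:
  assumes "neutral s" "rnormal s" "rnormal t"
  shows "rnormal (RApp s t)"
proof (rule rnormalI)
  fix E assume "rstep (RApp s t) E"
  then show False
    using assms by (cases rule: rstep.cases) (auto simp: rnormal_def neutral_def)
qed

lemma rnormal_lam_app_neutral:
  assumes "rnormal u" "neutral t" "rnormal t"
  shows "rnormal (RApp (Bag {#RLam u#}) t)"
proof (rule rnormalI)
  have "rnormal (Bag {#RLam u#})"
    by (rule rnormal_Bag) (use \<open>rnormal u\<close> in simp)
  fix E assume "rstep (RApp (Bag {#RLam u#}) t) E"
  then show False
    using assms \<open>rnormal (Bag {#RLam u#})\<close>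
    by (cases rule: rstep.cases) (auto simp: rnormal_def neutral_def)
qed

lemma Tn_var_spine_neutral:
  assumes B: "\<forall>t\<in>Tn B. rnormal t \<and> \<not> lam_app t"
    and As: "\<forall>A\<in>set As. \<forall>t\<in>Tn A. rnormal t"
  shows "\<forall>t\<in>Tn (bapps (BApp (BVar x) B) As). neutral t \<and> rnormal t"
  using As
proof (induction As rule: rev_induct)
  case Nil
  from B show ?case
    by (auto simp: neutral_def intro: rnormal_RApp_var)
next
  case (snoc A As)
  then show ?case
    by (auto simp: neutral_def intro: rnormal_RApp_neutral[unfolded neutral_def])
qed

lemma Tn_rnormal_mutual:
  "(is_A A \<longrightarrow> (\<forall>t\<in>Tn A. rnormal t))
 \<and> (is_B B \<longrightarrow> (\<forall>t\<in>Tn B. rnormal t \<and> \<not> lam_app t))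
 \<and> (is_C C \<longrightarrow> (\<forall>t\<in>Tn C. rnormal t))"
proof (induction rule: is_A_is_B_is_C.induct)
  case (B_var x)
  then show ?case by (auto intro!: rnormal_Bag simp: lam_app_def split: if_splits)
next
  case (B_lam A)
  then show ?case by (fastforce intro!: rnormal_Bag simp: lam_app_def)
next
  case B_bot
  then show ?case by (auto intro!: rnormal_Bag simp: lam_app_def)
next
  case (B_app B As x)
  then have "\<forall>t\<in>Tn (bapps (BApp (BVar x) B) As). neutral t \<and> rnormal t"
    by (intro Tn_var_spine_neutral) auto
  then show ?case by (fastforce simp: neutral_def lam_app_def)
next
  case (C_app A B As y)
  then have "\<forall>t\<in>Tn (bapps (BApp (BVar y) B) As). neutral t \<and> rnormal t"
    by (intro Tn_var_spine_neutral) auto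
  with C_app show ?case by (auto intro: rnormal_lam_app_neutral)
qed auto

corollary Tn_rnormal: "is_A A \<Longrightarrow> t \<in> Tn A \<Longrightarrow> rnormal t"
  using Tn_rnormal_mutual by blast

lemma nf_rnormal:
  assumes "rnormal t"
  shows "nf t = {t}"
proof -
  have "E = {t}" if "rsstep\<^sup>*\<^sup>* {t} E" for E
    using that
  proof (induction rule: rtranclp_induct)
    case (step E E')
    from \<open>rsstep E E'\<close> show ?case
    proof (cases rule: rsstep.cases)
      case (1 e E1 E2)
      with step.IH have "e = t" by (metis insertI1 singletonD)
      with 1 assms show ?thesis unfolding rnormal_def by blast
    qed
  qed simp
  with assms show ?thesis
    unfolding nf_def by (intro the_equality) auto
qed

fun taylor_bot :: "btrm \<Rightarrow> rtrm set" where
  "taylor_bot (BVar x) = {Bag (replicate_mset n (RVar x)) | n. True}"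
| "taylor_bot (BLam N) = {Bag B | B. \<forall>v\<in>#B. \<exists>t\<in>taylor_bot N. v = RLam t}"
| "taylor_bot (BApp P Q) = {RApp s t | s t. s \<in> taylor_bot P \<and> t \<in> taylor_bot Q}"
| "taylor_bot Bot = {Bag {#}}"

lemma taylor_bot_emb: "taylor_bot (emb M) = \<T> M"
  by (induction M) auto

lemma Tn_subset_taylor_bot: "Tn A \<subseteq> taylor_bot A"
proof (induction A)
  case (BLam A)
  then show ?case by fastforce
next
  case (BApp P Q)
  then show ?case using Tn_hd_subset_Tn[of P] by fastforce
qed auto

lemma taylor_bot_mono: "X \<sqsubseteq> Y \<Longrightarrow> taylor_bot X \<subseteq> taylor_bot Y"
proof (induction rule: bleq.induct)
  case (bot_var x)
  have "Bag {#} = Bag (replicate_mset 0 (RVar x))" by simp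
  then show ?case by auto
next
  case (ctx_lam M N)
  then show ?case by fastforce
qed auto

lemma Tn_subset_NF_taylor:
  assumes "is_A A" "A \<sqsubseteq> emb M"
  shows "Tn A \<subseteq> NF (\<T> M)"
proof
  fix t assume t: "t \<in> Tn A"
  have "t \<in> \<T> M"
    using t Tn_subset_taylor_bot taylor_bot_mono[OF \<open>A \<sqsubseteq> emb M\<close>] taylor_bot_emb by blast
  moreover have "nf t = {t}"
    using nf_rnormal Tn_rnormal[OF \<open>is_A A\<close> t] .
  ultimately show "t \<in> NF (\<T> M)"
    unfolding NF_def by blast
qed

fun linear_expansion :: "btrm \<Rightarrow> rtrm" where
  "linear_expansion (BVar x) = Bag {#RVar x#}"
| "linear_expansion (BLam A) = Bag {#RLam (linear_expansion A)#}"
| "linear_expansion Bot = Bag {#}"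
| "linear_expansion (BApp P Q) = RApp (linear_expansion P) (linear_expansion Q)"

text \<open>\<open>Tn_hd Bot\<close> is empty, so the linear expansion of an application headed by \<open>Bot\<close> is not in its \<open>Tn\<close>.\<close>

fun Bot_unapplied :: "btrm \<Rightarrow> bool" where
  "Bot_unapplied (BApp P Q) \<longleftrightarrow> P \<noteq> Bot \<and> Bot_unapplied P \<and> Bot_unapplied Q"
| "Bot_unapplied (BLam A) \<longleftrightarrow> Bot_unapplied A"
| "Bot_unapplied _ \<longleftrightarrow> True"

lemma Bot_unapplied_bapps:
  "Bot_unapplied (BApp P Q) \<Longrightarrow> \<forall>A\<in>set As. Bot_unapplied A \<Longrightarrow> Bot_unapplied (bapps (BApp P Q) As)"
proof (induction As rule: rev_induct)
  case (snoc A As)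
  obtain P' Q' where "bapps (BApp P Q) As = BApp P' Q'"
    using bapps_BApp_obtain .
  with snoc show ?case by simp
qed simp

lemma Bot_unapplied_approx:
  "(is_A A \<longrightarrow> Bot_unapplied A) \<and> (is_B B \<longrightarrow> Bot_unapplied B) \<and> (is_C C \<longrightarrow> Bot_unapplied C)"
proof (induction rule: is_A_is_B_is_C.induct)
  case (B_app B As x)
  then show ?case by (intro Bot_unapplied_bapps) auto
next
  case (C_app A B As y)
  then have "Bot_unapplied (bapps (BApp (BVar y) B) As)"
    by (intro Bot_unapplied_bapps) auto
  with C_app show ?case by simp
qed auto

lemma linear_expansion_in_Tn_if_in_Tn_hd:
  "(A \<noteq> Bot \<Longrightarrow> linear_expansion A \<in> Tn_hd A) \<Longrightarrow> linear_expansion A \<in> Tn A"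
  using Tn_hd_subset_Tn by (cases "A = Bot") auto

lemma linear_expansion_in_Tn_hd:
  "Bot_unapplied A \<Longrightarrow> A \<noteq> Bot \<Longrightarrow> linear_expansion A \<in> Tn_hd A"
proof (induction A)
  case (BLam A)
  then show ?case using linear_expansion_in_Tn_if_in_Tn_hd by auto
next
  case (BApp P Q)
  then show ?case using linear_expansion_in_Tn_if_in_Tn_hd by auto
qed auto

lemma linear_expansion_in_Tn:
  assumes "is_A A"
  shows "linear_expansion A \<in> Tn A"
  using assms Bot_unapplied_approx linear_expansion_in_Tn_hd linear_expansion_in_Tn_if_in_Tn_hd
  by blast

lemma bleq_BApp: "P \<sqsubseteq> P' \<Longrightarrow> Q \<sqsubseteq> Q' \<Longrightarrow> BApp P Q \<sqsubseteq> BApp P' Q'"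
  by (meson bleq.ctx_appL bleq.ctx_appR bleq.trans)

lemma bleq_if_linear_expansion_in_Tn: "linear_expansion A \<in> Tn A' \<Longrightarrow> A \<sqsubseteq> A'"
proof (induction A arbitrary: A')
  case (BVar x)
  then show ?case by (cases A') (auto intro: bleq.refl split: if_splits)
next
  case (BLam A)
  then show ?case by (cases A') (auto intro: bleq.ctx_lam)
next
  case (BApp P Q)
  then show ?case using Tn_hd_subset_Tn by (cases A') (auto intro!: bleq_BApp)
next
  case Bot
  then show ?case by (cases A') (auto intro: bleq.intros)
qed

lemma approx_set_downward_closed:
  assumes "is_A A" "A \<sqsubseteq> A'" "A' \<in> \<A> M"
  shows "A \<in> \<A> M"
  using assms unfolding approx_set_def by (blast intro: bleq.trans)

lemma approx_set_if_Tn_subset: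
  assumes "is_A A" "Tn A \<subseteq> (\<Union>A'\<in>\<A> M. Tn A')"
  shows "A \<in> \<A> M"
proof -
  obtain A' where "A' \<in> \<A> M" "linear_expansion A \<in> Tn A'"
    using assms linear_expansion_in_Tn by blast
  then show ?thesis
    using assms(1) bleq_if_linear_expansion_in_Tn approx_set_downward_closed by blast
qed

theorem lemma4p10:
  fixes M :: trm and A :: btrm
  assumes "is_A A"
  shows "(A \<sqsubseteq> emb M \<longrightarrow> Tn A \<subseteq> NF (\<T> M))
       \<and> (Tn A \<subseteq> (\<Union>A'\<in>\<A> M. Tn A') \<longrightarrow> A \<in> \<A> M)"
  using assms Tn_subset_NF_taylor approx_set_if_Tn_subset by blast

end
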